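(* Let $b\in\mathcal S(\kappa,R,\lambda)$ with $\kappa>0$, $R,\lambda\ge0$. For $\varsigma\in\mathcal C([0,1],\mathbb R^n)$ with $\varsigma(0)=0$, $u\in L^\infty([0,1],\mathbb R^n)$ and $x_0\in\mathbb R^n$, let $x^{\varsigma,u}$ solve $x^{\varsigma,u}(t)=x_0+\int_0^tb(x^{\varsigma,u}(s))\,ds+\varsigma(t)+\int_0^tu(s)\,ds$, $t\in[0,1]$. Let $\eta<\frac12$ and $\bar R>0$. Then there is $M>0$ such that for each such $\varsigma$ and each $x_0\in\mathbb R^n$ there is a piecewise constant control $u\in L^\infty([0,1],\mathbb R^n)$ with $|u|_\infty+|\mathcal D_u|\le M$ such that $\mathrm{Leb}(\{t\in[0,1]:|x^{\varsigma,u}(t)|>\bar R\})\ge\eta$.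
   Context: $\mathcal S(\kappa,R,\lambda)$ is the set of Lipschitz $b:\mathbb R^n\to\mathbb R^n$ with $\langle b(x)-b(y),x-y\rangle\le-\kappa|x-y|^2$ if $|x|,|y|\ge R$ and $\le\lambda|x-y|^2$ otherwise. For a piecewise constant $u:[0,1]\to\mathbb R^n$, $\mathcal D_u\subset[0,1]$ is its finite set of discontinuities and $|\mathcal D_u|$ its cardinality. *)

theory Defs
  imports "HOL-Analysis.Analysis"
begin

definition drift_class :: "real \<Rightarrow> real \<Rightarrow> real \<Rightarrow> (real^'n \<Rightarrow> real^'n) \<Rightarrow> bool" where
  "drift_class \<kappa> R lam b \<longleftrightarrow>
     (\<exists>C. C-lipschitz_on UNIV b) \<and>
     (\<forall>x y. (norm x \<ge> R \<and> norm y \<ge> R \<longrightarrow> (b x - b y) \<bullet> (x - y) \<le> - \<kappa> * (norm (x - y))\<^sup>2) \<and>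
            (\<not> (norm x \<ge> R \<and> norm y \<ge> R) \<longrightarrow> (b x - b y) \<bullet> (x - y) \<le> lam * (norm (x - y))\<^sup>2))"

definition disc_set :: "(real \<Rightarrow> real^'n) \<Rightarrow> real set" where
  "disc_set u = {t \<in> {0..1}. \<not> continuous (at t within {0..1}) u}"

definition piecewise_const :: "(real \<Rightarrow> real^'n) \<Rightarrow> bool" where
  "piecewise_const u \<longleftrightarrow> finite (disc_set u) \<and>
     (\<forall>t \<in> {0..1} - disc_set u. \<exists>e>0. \<forall>s\<in>{0..1}. dist s t < e \<longrightarrow> u s = u t)"

definition solves :: "(real^'n \<Rightarrow> real^'n) \<Rightarrow> real^'n \<Rightarrow> (real \<Rightarrow> real^'n) \<Rightarrow> (real \<Rightarrow> real^'n)
    \<Rightarrow> (real \<Rightarrow> real^'n) \<Rightarrow> bool" where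
  "solves b x0 \<sigma> u x \<longleftrightarrow> continuous_on {0..1} x \<and>
     (\<forall>t\<in>{0..1}. x t = x0 + integral {0..t} (\<lambda>s. b (x s)) + \<sigma> t + integral {0..t} u)"

end

theory Submission
  imports Defs
begin

text \<open>Take the two constant controls \<open>\<plusminus>u\<close> with \<open>|u| = M\<close> large. If the control \<open>u\<close> fails, fix a solution \<open>x\<^sub>1\<close> which stays in the
  ball of radius \<open>Rbar\<close> outside a set of measure \<open>< \<eta>\<close>, and let \<open>x\<^sub>2\<close> be any solution for \<open>-u\<close>.
  Their difference \<open>z\<close> satisfies \<open>z t - z s = 2(t - s) u + \<integral>\<^sub>s\<^sup>t (b(x\<^sub>1) - b(x\<^sub>2))\<close>, where the
  integrand is bounded by \<open>C |z|\<close>: \<open>z\<close> moves with velocity \<open>2u\<close> up to a perturbation proportional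
  to its size. On a time window of length \<open>\<le> 1/(8C)\<close> this forces \<open>z\<close> to spend at most time
  \<open>O(Rbar/M)\<close> in the ball of radius \<open>2 Rbar\<close>; covering \<open>[0,1]\<close> by \<open>O(C)\<close> such windows,
  \<open>|z| > 2 Rbar\<close> outside a set of measure \<open>O((1 + C) Rbar/M) \<le> 1 - 2\<eta>\<close>. Wherever
  \<open>|z| > 2 Rbar\<close>, one of \<open>x\<^sub>1\<close>, \<open>x\<^sub>2\<close> leaves the ball of radius \<open>Rbar\<close>, so \<open>x\<^sub>2\<close> does so on a
  set of measure \<open>> \<eta>\<close>.\<close>

lemma closed_sublevel_on:
  fixes f :: "'a::topological_space \<Rightarrow> real"
  assumes "closed S" and "continuous_on S f"
  shows "closed {x\<in>S. f x \<le> c}"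
proof -
  have "{x\<in>S. f x \<le> c} = S \<inter> f -` {..c}" by auto
  then show ?thesis using continuous_closed_preimage[OF assms(2,1) closed_atMost] by simp
qed

lemma sublevel_on_interval_lmeasurable:
  fixes f :: "real \<Rightarrow> real"
  assumes "continuous_on {a..b} f"
  shows "{t\<in>{a..b}. f t \<le> c} \<in> lmeasurable"
proof (rule lmeasurable_compact)
  have "bounded {t\<in>{a..b}. f t \<le> c}"
    by (rule bounded_subset[of "{a..b}"]) auto
  then show "compact {t\<in>{a..b}. f t \<le> c}"
    using closed_sublevel_on[OF closed_atLeastAtMost assms] by (simp add: compact_eq_bounded_closed)
qed

lemma superlevel_on_interval_lmeasurable:
  fixes f :: "real \<Rightarrow> real"
  assumes "continuous_on {a..b} f"
  shows "{t\<in>{a..b}. f t > c} \<in> lmeasurable"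
proof -
  have "{t\<in>{a..b}. f t > c} = {a..b} - {t\<in>{a..b}. f t \<le> c}" by auto
  then show ?thesis
    using fmeasurable_Diff[OF _ fmeasurableD[OF sublevel_on_interval_lmeasurable[OF assms]]] by simp
qed

lemma unit_interval_subset_UN_subintervals:
  assumes "N > 0"
  shows "{0..1} \<subseteq> (\<Union>k<N. {real k / N .. real (Suc k) / N})"
proof
  fix t :: real assume t: "t \<in> {0..1}"
  define k where "k = min (N - 1) (nat \<lfloor>t * N\<rfloor>)"
  have "k < N" using assms by (simp add: k_def)
  moreover have "real k \<le> t * N"
  proof -
    have "real k \<le> real (nat \<lfloor>t * N\<rfloor>)" by (simp add: k_def)
    also have "\<dots> \<le> t * N" using t by simp
    finally show ?thesis .
  qed
  moreover have "t * N \<le> real (Suc k)"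
  proof (cases "N - 1 \<le> nat \<lfloor>t * N\<rfloor>")
    case True
    then show ?thesis using t assms by (simp add: k_def of_nat_diff)
  next
    case False
    then show ?thesis by (simp add: k_def) linarith
  qed
  ultimately show "t \<in> (\<Union>k<N. {real k / N .. real (Suc k) / N})"
    using assms by (auto simp: field_simps)
qed

lemma measure_apart_le:
  fixes x1 x2 :: "real \<Rightarrow> 'a::real_normed_vector"
  assumes "continuous_on {0..1} x1" and "continuous_on {0..1} x2"
  shows "measure lebesgue {t\<in>{0..1}. norm (x1 t - x2 t) > R1 + R2}
    \<le> measure lebesgue {t\<in>{0..1}. norm (x1 t) > R1} + measure lebesgue {t\<in>{0..1}. norm (x2 t) > R2}"
proof -
  let ?D = "{t\<in>{0..1}. norm (x1 t - x2 t) > R1 + R2}"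
  let ?G1 = "{t\<in>{0..1}. norm (x1 t) > R1}" and ?G2 = "{t\<in>{0..1}. norm (x2 t) > R2}"
  have G: "?G1 \<in> lmeasurable" "?G2 \<in> lmeasurable"
    by (rule superlevel_on_interval_lmeasurable[OF continuous_on_norm[OF assms(1)]],
        rule superlevel_on_interval_lmeasurable[OF continuous_on_norm[OF assms(2)]])
  have "?D \<in> lmeasurable"
    using assms by (intro superlevel_on_interval_lmeasurable continuous_on_norm continuous_on_diff)
  moreover have "?D \<subseteq> ?G1 \<union> ?G2"
  proof
    fix t assume "t \<in> ?D"
    then show "t \<in> ?G1 \<union> ?G2"
      using norm_triangle_ineq4[of "x1 t" "x2 t"] by auto
  qed
  ultimately have "measure lebesgue ?D \<le> measure lebesgue (?G1 \<union> ?G2)"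
    using G by (intro measure_mono_fmeasurable) auto
  also have "\<dots> \<le> measure lebesgue ?G1 + measure lebesgue ?G2"
    using G by (intro measure_Un_le) auto
  finally show ?thesis .
qed

locale perturbed_linear_motion =
  fixes z :: "real \<Rightarrow> 'a::real_normed_vector" and w :: 'a and L :: real
  assumes continuous: "continuous_on {0..1} z"
    and L_nonneg: "0 \<le> L"
    and increment_bound: "\<And>s t r. 0 \<le> s \<Longrightarrow> s \<le> t \<Longrightarrow> t \<le> 1 \<Longrightarrow> \<forall>\<tau>\<in>{s..t}. norm (z \<tau>) \<le> r \<Longrightarrow>
      norm (z t - z s - (t - s) *\<^sub>R w) \<le> L * r * (t - s)"
begin

lemma sublevel_lmeasurable:
  assumes "0 \<le> a" "b \<le> 1"
  shows "{t\<in>{a..b}. norm (z t) \<le> \<rho>} \<in> lmeasurable"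
  using assms
  by (intro sublevel_on_interval_lmeasurable continuous_on_norm continuous_on_subset[OF continuous]) auto

lemma short_window_norm_bound:
  assumes h: "8 * L * h \<le> 1" and \<rho>: "8 * L * \<rho> \<le> norm w"
    and st: "0 \<le> s" "s \<le> t" "t \<le> 1" "t - s \<le> h" and zs: "norm (z s) \<le> \<rho>"
  obtains m where "\<forall>\<sigma>\<in>{s..t}. norm (z \<sigma>) \<le> m" and "7 * (L * m) \<le> 2 * norm w"
proof -
  have "continuous_on {s..t} (\<lambda>\<sigma>. norm (z \<sigma>))"
    using st by (intro continuous_on_norm continuous_on_subset[OF continuous]) auto
  then obtain \<tau> where \<tau>: "\<tau> \<in> {s..t}" and max: "\<forall>\<sigma>\<in>{s..t}. norm (z \<sigma>) \<le> norm (z \<tau>)"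
    using continuous_attains_sup[of "{s..t}" "\<lambda>\<sigma>. norm (z \<sigma>)"] st by auto
  define m where "m = norm (z \<tau>)"
  have Lm: "0 \<le> L * m" using L_nonneg by (simp add: m_def)
  have "norm (z \<tau> - z s - (\<tau> - s) *\<^sub>R w) \<le> L * m * (\<tau> - s)"
    using increment_bound[of s \<tau> m] \<tau> st max by (auto simp: m_def)
  then have "m \<le> \<rho> + (\<tau> - s) * norm w + L * m * (\<tau> - s)"
    using norm_triangle_ineq[of "z s + (\<tau> - s) *\<^sub>R w" "z \<tau> - z s - (\<tau> - s) *\<^sub>R w"]
      norm_triangle_ineq[of "z s" "(\<tau> - s) *\<^sub>R w"] zs \<tau> by (simp add: m_def)
  also have "\<dots> \<le> \<rho> + h * norm w + m / 8"
  proof -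
    have "(\<tau> - s) * norm w \<le> h * norm w" using \<tau> st by (intro mult_right_mono) auto
    moreover have "L * m * (\<tau> - s) \<le> L * m * h" using \<tau> st Lm by (intro mult_left_mono) auto
    moreover have "m * (L * h) \<le> m * (1 / 8)" using h by (intro mult_left_mono) (auto simp: m_def)
    ultimately show ?thesis by (simp add: algebra_simps)
  qed
  finally have "7 * m \<le> 8 * \<rho> + 8 * h * norm w" by simp
  then have "7 * (L * m) \<le> 8 * L * \<rho> + 8 * L * h * norm w"
    using mult_left_mono[OF _ L_nonneg] by (fastforce simp: algebra_simps)
  also have "\<dots> \<le> 2 * norm w"
    using \<rho> mult_right_mono[OF h norm_ge_zero[of w]] by simp
  finally show thesis using that max unfolding m_def by blast
qed

text \<open>On a short window the perturbation \<open>L |z|\<close> is at most \<open>2/7\<close> of the drift \<open>|w|\<close>,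
  so \<open>|z t - z s| \<ge> 5/7 |w| (t - s)\<close>.\<close>

lemma ball_visits_close:
  assumes h: "8 * L * h \<le> 1" and \<rho>: "8 * L * \<rho> \<le> norm w"
    and st: "0 \<le> s" "s \<le> t" "t \<le> 1" "t - s \<le> h"
    and zs: "norm (z s) \<le> \<rho>" and zt: "norm (z t) \<le> \<rho>"
  shows "norm w * (t - s) \<le> 4 * \<rho>"
proof -
  obtain m where max: "\<forall>\<sigma>\<in>{s..t}. norm (z \<sigma>) \<le> m" and Lm: "7 * (L * m) \<le> 2 * norm w"
    using short_window_norm_bound[OF h \<rho> st zs] .
  have "7 * (L * m * (t - s)) \<le> 2 * norm w * (t - s)"
    using st mult_right_mono[OF Lm, of "t - s"] by (simp add: algebra_simps)
  moreover have "norm (z t - z s - (t - s) *\<^sub>R w) \<le> L * m * (t - s)"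
    using increment_bound[OF st(1-3) max] .
  moreover have "(t - s) * norm w \<le> norm (z t - z s) + norm (z t - z s - (t - s) *\<^sub>R w)"
    using norm_triangle_ineq3[of "(t - s) *\<^sub>R w" "z t - z s"] st by (simp add: norm_minus_commute)
  moreover have "norm (z t - z s) \<le> 2 * \<rho>"
    using norm_triangle_ineq4[of "z t" "z s"] zs zt by simp
  ultimately have "5 * (norm w * (t - s)) \<le> 14 * \<rho>" by (simp add: algebra_simps)
  then show ?thesis using zs norm_ge_zero[of "z s"] by linarith
qed

lemma measure_ball_visits_short_interval:
  assumes h: "8 * L * h \<le> 1" and \<rho>: "8 * L * \<rho> \<le> norm w" "0 \<le> \<rho>" and "w \<noteq> 0"
    and ab: "0 \<le> a" "b \<le> 1" "b - a \<le> h"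
  shows "measure lebesgue {t\<in>{a..b}. norm (z t) \<le> \<rho>} \<le> 8 * \<rho> / norm w"
proof (cases "{t\<in>{a..b}. norm (z t) \<le> \<rho>} = {}")
  case True
  then have "measure lebesgue {t\<in>{a..b}. norm (z t) \<le> \<rho>} = 0" by (simp only: measure_empty)
  then show ?thesis using \<rho> by simp
next
  case False
  let ?T = "{t\<in>{a..b}. norm (z t) \<le> \<rho>}"
  let ?r = "4 * \<rho> / norm w"
  obtain t0 where t0: "t0 \<in> ?T" using False by blast
  have close: "norm w * \<bar>t - t'\<bar> \<le> 4 * \<rho>" if "t \<in> ?T" "t' \<in> ?T" for t t'
    using ball_visits_close[OF h \<rho>(1)] that ab
    by (cases "t' \<le> t") (auto simp: abs_if)
  have "?T \<subseteq> {t0 - ?r .. t0 + ?r}"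
  proof
    fix t assume "t \<in> ?T"
    from close[OF this t0] have "norm w * \<bar>t - t0\<bar> \<le> 4 * \<rho>" .
    then have "\<bar>t - t0\<bar> \<le> ?r" using \<open>w \<noteq> 0\<close> by (simp add: field_simps)
    then show "t \<in> {t0 - ?r .. t0 + ?r}" by auto
  qed
  moreover have "?T \<in> lmeasurable" using ab(1,2) by (rule sublevel_lmeasurable)
  ultimately have "measure lebesgue ?T \<le> measure lebesgue {t0 - ?r .. t0 + ?r}"
    by (intro measure_mono_fmeasurable) auto
  also have "\<dots> = 8 * \<rho> / norm w" using \<rho>(2) by simp
  finally show ?thesis .
qed

lemma measure_ball_visits_le:
  fixes N :: nat
  assumes N: "N > 0" "8 * L \<le> N" and \<rho>: "8 * L * \<rho> \<le> norm w" "0 \<le> \<rho>" and "w \<noteq> 0"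
  shows "measure lebesgue {t\<in>{0..1}. norm (z t) \<le> \<rho>} \<le> N * (8 * \<rho> / norm w)"
proof -
  define T where "T k = {t\<in>{real k / N .. real (Suc k) / N}. norm (z t) \<le> \<rho>}" for k
  have T: "T k \<in> lmeasurable" "measure lebesgue (T k) \<le> 8 * \<rho> / norm w" if "k < N" for k
  proof -
    have "8 * L * (1 / N) \<le> 1" using N by (simp add: field_simps)
    moreover have "real (Suc k) / N \<le> 1" "real (Suc k) / N - real k / N \<le> 1 / N"
      using that by (simp_all add: field_simps)
    ultimately show "measure lebesgue (T k) \<le> 8 * \<rho> / norm w"
      unfolding T_def using \<rho> \<open>w \<noteq> 0\<close> by (intro measure_ball_visits_short_interval) auto
    show "T k \<in> lmeasurable"
      unfolding T_def using \<open>real (Suc k) / N \<le> 1\<close> by (intro sublevel_lmeasurable) auto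
  qed
  have "{t\<in>{0..1}. norm (z t) \<le> \<rho>} \<subseteq> (\<Union>k<N. T k)"
  proof
    fix t assume t: "t \<in> {t\<in>{0..1}. norm (z t) \<le> \<rho>}"
    then have "t \<in> {0..1}" by simp
    then obtain k where "k < N" "t \<in> {real k / N .. real (Suc k) / N}"
      using unit_interval_subset_UN_subintervals[OF N(1)] by blast
    then show "t \<in> (\<Union>k<N. T k)" using t unfolding T_def by auto
  qed
  then have "measure lebesgue {t\<in>{0..1}. norm (z t) \<le> \<rho>} \<le> measure lebesgue (\<Union>k<N. T k)"
    using T(1) sublevel_lmeasurable[of 0 1 \<rho>]
    by (intro measure_mono_fmeasurable fmeasurable.finite_UN fmeasurableD) auto
  also have "\<dots> \<le> (\<Sum>k<N. measure lebesgue (T k))"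
    using T(1) by (intro measure_UNION_le fmeasurableD) auto
  also have "\<dots> \<le> N * (8 * \<rho> / norm w)"
    using sum_mono[of "{..<N}" "\<lambda>k. measure lebesgue (T k)" "\<lambda>_. 8 * \<rho> / norm w"] T by simp
  finally show ?thesis .
qed

lemma measure_outside_ball_ge:
  fixes N :: nat
  assumes "N > 0" "8 * L \<le> N" "8 * L * \<rho> \<le> norm w" "0 \<le> \<rho>" "w \<noteq> 0"
  shows "1 - N * (8 * \<rho> / norm w) \<le> measure lebesgue {t\<in>{0..1}. norm (z t) > \<rho>}"
proof -
  let ?S = "{t\<in>{0..1}. norm (z t) \<le> \<rho>}"
  have "{t\<in>{0..1}. norm (z t) > \<rho>} = {0..1} - ?S" by auto
  also have "measure lebesgue \<dots> = measure lebesgue {0..1::real} - measure lebesgue ?S"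
    using sublevel_lmeasurable[of 0 1 \<rho>] by (intro measure_Diff) (auto simp: fmeasurableD)
  finally have "measure lebesgue {t\<in>{0..1}. norm (z t) > \<rho>} = 1 - measure lebesgue ?S"
    by simp
  then show ?thesis using measure_ball_visits_le[OF assms] by simp
qed

end

lemma disc_set_const [simp]: "disc_set (\<lambda>_. v) = {}"
  unfolding disc_set_def by simp

lemma piecewise_const_const: "piecewise_const (\<lambda>_. v)"
  unfolding piecewise_const_def by (auto intro: exI[of _ 1])

lemma solves_continuous: "solves b x0 \<sigma> u x \<Longrightarrow> continuous_on {0..1} x"
  unfolding solves_def by simp

lemma solves_eq:
  "solves b x0 \<sigma> u x \<Longrightarrow> t \<in> {0..1} \<Longrightarrow>
    x t = x0 + integral {0..t} (\<lambda>s. b (x s)) + \<sigma> t + integral {0..t} u"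
  unfolding solves_def by blast

lemma perturbed_linear_motion_const_controls:
  fixes b :: "real^'n \<Rightarrow> real^'n"
  assumes Lip: "C-lipschitz_on UNIV b"
    and s1: "solves b x0 \<sigma> (\<lambda>_. u1) x1" and s2: "solves b x0 \<sigma> (\<lambda>_. u2) x2"
  shows "perturbed_linear_motion (\<lambda>t. x1 t - x2 t) (u1 - u2) C"
proof
  show "continuous_on {0..1} (\<lambda>t. x1 t - x2 t)"
    using s1 s2 by (intro continuous_on_diff solves_continuous)
  show "0 \<le> C" using Lip by (rule lipschitz_on_nonneg)
  have b_x: "continuous_on {0..1} (\<lambda>\<tau>. b (x \<tau>))" if "solves b x0 \<sigma> u x" for u x
    using continuous_on_compose2[OF lipschitz_on_continuous_on[OF Lip] solves_continuous[OF that]]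
    by simp
  let ?D = "\<lambda>\<tau>. b (x1 \<tau>) - b (x2 \<tau>)"
  have D: "continuous_on {0..1} ?D" using b_x[OF s1] b_x[OF s2] by (rule continuous_on_diff)
  have integrable: "f integrable_on {0..t}" if "continuous_on {0..1} f" "t \<le> 1" for f :: "real \<Rightarrow> real^'n" and t
    using integrable_continuous_real[OF continuous_on_subset[OF that(1)]] that by auto
  have difference: "x1 t - x2 t = integral {0..t} ?D + t *\<^sub>R (u1 - u2)" if "t \<in> {0..1}" for t
  proof -
    have "x1 t = x0 + integral {0..t} (\<lambda>\<tau>. b (x1 \<tau>)) + \<sigma> t + t *\<^sub>R u1"
      "x2 t = x0 + integral {0..t} (\<lambda>\<tau>. b (x2 \<tau>)) + \<sigma> t + t *\<^sub>R u2"
      using solves_eq[OF s1 that] solves_eq[OF s2 that] that by simp_all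
    moreover have "integral {0..t} ?D = integral {0..t} (\<lambda>\<tau>. b (x1 \<tau>)) - integral {0..t} (\<lambda>\<tau>. b (x2 \<tau>))"
      using that integrable[OF b_x[OF s1], of t] integrable[OF b_x[OF s2], of t]
      by (simp add: integral_diff)
    ultimately show ?thesis by (simp add: scaleR_diff_right)
  qed
  fix s t r
  assume st: "0 \<le> s" "s \<le> t" "t \<le> 1" and r: "\<forall>\<tau>\<in>{s..t}. norm (x1 \<tau> - x2 \<tau>) \<le> r"
  have "x1 t - x2 t - (x1 s - x2 s) - (t - s) *\<^sub>R (u1 - u2) = integral {0..t} ?D - integral {0..s} ?D"
    using st by (simp add: difference scaleR_diff_left)
  also have "\<dots> = integral {s..t} ?D"
    using Henstock_Kurzweil_Integration.integral_combine[OF st(1,2) integrable[OF D st(3)]]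
    by (simp add: algebra_simps)
  also have "norm \<dots> \<le> C * r * (t - s)"
  proof (rule integral_bound)
    show "continuous_on {s..t} ?D" using st by (intro continuous_on_subset[OF D]) auto
    fix \<tau> assume "\<tau> \<in> {s..t}"
    then have "C * norm (x1 \<tau> - x2 \<tau>) \<le> C * r"
      using r lipschitz_on_nonneg[OF Lip] by (simp add: mult_left_mono)
    then show "norm (?D \<tau>) \<le> C * r"
      using lipschitz_on_normD[OF Lip, of "x1 \<tau>" "x2 \<tau>"] by simp
  qed (use st in simp)
  finally show "norm (x1 t - x2 t - (x1 s - x2 s) - (t - s) *\<^sub>R (u1 - u2)) \<le> C * r * (t - s)" .
qed

lemma escape_measures_opposite_controls_ge:
  fixes b :: "real^'n \<Rightarrow> real^'n" and C :: real and N :: nat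
  assumes Lip: "C-lipschitz_on UNIV b"
    and s1: "solves b x0 \<sigma> (\<lambda>_. u) x1" and s2: "solves b x0 \<sigma> (\<lambda>_. - u) x2"
    and N: "N > 0" "8 * C \<le> N" and R: "0 \<le> R1 + R2" "4 * C * (R1 + R2) \<le> norm u" and "u \<noteq> 0"
  shows "1 - N * (4 * (R1 + R2) / norm u)
    \<le> measure lebesgue {t\<in>{0..1}. norm (x1 t) > R1} + measure lebesgue {t\<in>{0..1}. norm (x2 t) > R2}"
proof -
  interpret perturbed_linear_motion "\<lambda>t. x1 t - x2 t" "u - - u" C
    using Lip s1 s2 by (rule perturbed_linear_motion_const_controls)
  have w: "norm (u - - u) = 2 * norm u" "u - - u \<noteq> 0"
    using \<open>u \<noteq> 0\<close> by (simp_all add: norm_mult_numeral1 flip: scaleR_2)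
  have "1 - N * (4 * (R1 + R2) / norm u) = 1 - N * (8 * (R1 + R2) / norm (u - - u))"
    using \<open>u \<noteq> 0\<close> unfolding w(1) by (simp add: field_simps)
  also have "\<dots> \<le> measure lebesgue {t\<in>{0..1}. norm (x1 t - x2 t) > R1 + R2}"
    using N R w by (intro measure_outside_ball_ge) auto
  also have "\<dots> \<le> measure lebesgue {t\<in>{0..1}. norm (x1 t) > R1} + measure lebesgue {t\<in>{0..1}. norm (x2 t) > R2}"
    using s1 s2 by (intro measure_apart_le solves_continuous)
  finally show ?thesis .
qed

lemma one_opposite_control_escapes:
  fixes b :: "real^'n \<Rightarrow> real^'n" and C :: real and N :: nat
  assumes Lip: "C-lipschitz_on UNIV b" and N: "N > 0" "8 * C \<le> N"
    and "0 \<le> R" and "u \<noteq> 0" and u: "4 * C * (R + R) \<le> norm u" "N * (4 * (R + R) / norm u) \<le> 1 - 2 * \<eta>"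
  shows "\<exists>v\<in>{u, - u}. \<forall>x. solves b x0 \<sigma> (\<lambda>_. v) x \<longrightarrow> \<eta> \<le> measure lebesgue {t\<in>{0..1}. norm (x t) > R}"
proof (rule ccontr)
  assume "\<not> ?thesis"
  then obtain x1 x2 where s1: "solves b x0 \<sigma> (\<lambda>_. u) x1" and s2: "solves b x0 \<sigma> (\<lambda>_. - u) x2"
    and "measure lebesgue {t\<in>{0..1}. norm (x1 t) > R} < \<eta>" "measure lebesgue {t\<in>{0..1}. norm (x2 t) > R} < \<eta>"
    by (auto simp: not_le)
  moreover have "0 \<le> R + R" using \<open>0 \<le> R\<close> by simp
  note escape_measures_opposite_controls_ge[OF Lip s1 s2 N this u(1) \<open>u \<noteq> 0\<close>]
  ultimately show False using u(2) by linarith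
qed

lemma escaping_control_size:
  fixes b :: "real^'n \<Rightarrow> real^'n"
  assumes Lip: "C-lipschitz_on UNIV b" and "\<eta> < 1/2" and "0 \<le> R"
  obtains M where "M > 0" and "\<And>u x0 \<sigma>. norm u = M \<Longrightarrow>
    \<exists>v\<in>{u, - u}. \<forall>x. solves b x0 \<sigma> (\<lambda>_. v) x \<longrightarrow> \<eta> \<le> measure lebesgue {t\<in>{0..1}. norm (x t) > R}"
proof -
  define N where "N = nat \<lceil>8 * C\<rceil> + 1"
  define A where "A = N * (4 * (R + R)) / (1 - 2 * \<eta>)"
  define M where "M = 4 * C * (R + R) + A + 1"
  have N: "N > 0" "8 * C \<le> N" unfolding N_def by linarith+
  have C_R: "0 \<le> 4 * C * (R + R)" using lipschitz_on_nonneg[OF Lip] \<open>0 \<le> R\<close> by simp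
  moreover have "0 \<le> A" using assms(2,3) by (simp add: A_def)
  ultimately have M: "M > 0" "4 * C * (R + R) \<le> M" by (simp_all add: M_def)
  have "N * (4 * (R + R)) = A * (1 - 2 * \<eta>)" using assms(2) by (simp add: A_def)
  also have "\<dots> \<le> M * (1 - 2 * \<eta>)" using assms(2) C_R by (simp add: M_def)
  finally have M_large: "N * (4 * (R + R) / M) \<le> 1 - 2 * \<eta>" using M(1) by (simp add: field_simps)
  show thesis
  proof (rule that[OF M(1)])
    fix u :: "real^'n" and x0 \<sigma> assume u: "norm u = M"
    then have "u \<noteq> 0" using M(1) by auto
    from one_opposite_control_escapes[OF Lip N \<open>0 \<le> R\<close> this, unfolded u, OF M(2) M_large]
    show "\<exists>v\<in>{u, - u}. \<forall>x. solves b x0 \<sigma> (\<lambda>_. v) x \<longrightarrow> \<eta> \<le> measure lebesgue {t\<in>{0..1}. norm (x t) > R}" .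
  qed
qed

theorem proposition3p9:
  fixes b :: "real^'n \<Rightarrow> real^'n" and \<kappa> R lam \<eta> Rbar :: real
  assumes "drift_class \<kappa> R lam b" and "\<kappa> > 0" and "R \<ge> 0" and "lam \<ge> 0"
    and "\<eta> < 1/2" and "Rbar > 0"
  shows "\<exists>M>0. \<forall>(\<sigma>::real \<Rightarrow> real^'n) x0. continuous_on {0..1} \<sigma> \<and> \<sigma> 0 = 0 \<longrightarrow>
           (\<exists>u. piecewise_const u \<and>
                (\<forall>t\<in>{0..1}. norm (u t) + real (card (disc_set u)) \<le> M) \<and>
                (\<forall>x. solves b x0 \<sigma> u x \<longrightarrow>
                       measure lebesgue {t \<in> {0..1}. norm (x t) > Rbar} \<ge> \<eta>))"
proof -
  obtain C where Lip: "C-lipschitz_on UNIV b"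
    using assms(1) unfolding drift_class_def by blast
  obtain M where M: "M > 0" and escapes: "\<And>u x0 \<sigma>. norm u = M \<Longrightarrow>
      \<exists>v\<in>{u, - u}. \<forall>x. solves b x0 \<sigma> (\<lambda>_. v) x \<longrightarrow> \<eta> \<le> measure lebesgue {t\<in>{0..1}. norm (x t) > Rbar}"
    using escaping_control_size[OF Lip assms(5) less_imp_le[OF assms(6)]] by blast
  obtain u :: "real^'n" where u: "norm u = M"
    by (rule vector_choose_size[OF less_imp_le[OF M]])
  show ?thesis
  proof (intro exI[of _ M] conjI allI impI M)
    fix \<sigma> :: "real \<Rightarrow> real^'n" and x0
    obtain v where "v \<in> {u, - u}"
      and "\<forall>x. solves b x0 \<sigma> (\<lambda>_. v) x \<longrightarrow> \<eta> \<le> measure lebesgue {t\<in>{0..1}. norm (x t) > Rbar}"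
      using escapes[OF u, of x0 \<sigma>] by blast
    moreover from \<open>v \<in> {u, - u}\<close> have "norm v = M" using u by auto
    ultimately show "\<exists>u. piecewise_const u \<and> (\<forall>t\<in>{0..1}. norm (u t) + real (card (disc_set u)) \<le> M) \<and>
            (\<forall>x. solves b x0 \<sigma> u x \<longrightarrow> measure lebesgue {t \<in> {0..1}. norm (x t) > Rbar} \<ge> \<eta>)"
      using piecewise_const_const by (intro exI[of _ "\<lambda>_. v"]) simp
  qed
qed

end
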